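(* Let $\mathcal F$ be an $F$-category, $\mathcal C=\mathcal F^{(0)}$ its full subcategory of connected objects, $\jmath:\mathcal C\hookrightarrow\mathcal F$ the inclusion, and $J$ a Grothendieck topology on $\mathcal C$. A presheaf of sets $G$ on $\mathcal F$ is a sheaf for $\jmath_*J$ if and only if (a) its restriction to $\mathcal C$ is a $J$-sheaf, (b) $G(\emptyset)$ is a one-point set for an initial object $\emptyset$, and (c) for every finite family $(N_i)_{i\in I}$ of objects, the maps induced by the coprojections give a bijection $G(\coprod_i N_i)\to\prod_i G(N_i)$.
   Context: An object $Y$ of a category with initial object and finite coproducts is connected if for every finite family $(N_i)_{i\in I}$ the natural map $\coprod_i\operatorname{Hom}(Y,N_i)\to\operatorname{Hom}(Y,\coprod_iN_i)$ is bijective. An $F$-category is a category having an initial object and finite coproducts in which every object is isomorphic to a finite coproduct of connected objects. For a functor $F:\mathcal C\to\mathcal D$ and a topology $J$ on $\mathcal C$, the pushforward topology $F_*J$ on $\mathcal D$ is the finest topology making $F$ cocontinuous; explicitly, a sieve $R$ on $X\in\mathcal D$ is $F_*J$-covering iff for every object $Y$ of $\mathcal C$ and every morphism $f:F(Y)\to X$, the sieve $\{g:Z\to Y : f\circ F(g)\in R\}$ on $Y$ belongs to $J(Y)$. *)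

theory Defs
  imports "HOL-Library.FuncSet"
begin

text \<open>Small categories given explicitly by objects, arrows, domain, codomain,
identities and composition. Comp g f is the composite of g after f.\<close>

record ('o, 'm) cat =
  Obj :: "'o set"
  Arr :: "'m set"
  Dom :: "'m \<Rightarrow> 'o"
  Cod :: "'m \<Rightarrow> 'o"
  Id  :: "'o \<Rightarrow> 'm"
  Comp :: "'m \<Rightarrow> 'm \<Rightarrow> 'm"

definition hom :: "('o, 'm) cat \<Rightarrow> 'o \<Rightarrow> 'o \<Rightarrow> 'm set" where
  "hom C X Y = {f \<in> Arr C. Dom C f = X \<and> Cod C f = Y}"

definition category :: "('o, 'm) cat \<Rightarrow> bool" where
  "category C \<longleftrightarrow>
     (\<forall>f \<in> Arr C. Dom C f \<in> Obj C \<and> Cod C f \<in> Obj C) \<and>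
     (\<forall>X \<in> Obj C. Id C X \<in> hom C X X) \<and>
     (\<forall>f \<in> Arr C. \<forall>g \<in> Arr C. Cod C f = Dom C g \<longrightarrow>
        Comp C g f \<in> hom C (Dom C f) (Cod C g)) \<and>
     (\<forall>f \<in> Arr C. Comp C f (Id C (Dom C f)) = f \<and> Comp C (Id C (Cod C f)) f = f) \<and>
     (\<forall>f \<in> Arr C. \<forall>g \<in> Arr C. \<forall>h \<in> Arr C.
        Cod C f = Dom C g \<longrightarrow> Cod C g = Dom C h \<longrightarrow>
        Comp C h (Comp C g f) = Comp C (Comp C h g) f)"

definition is_iso :: "('o, 'm) cat \<Rightarrow> 'm \<Rightarrow> bool" where
  "is_iso C f \<longleftrightarrow> f \<in> Arr C \<and>
     (\<exists>g \<in> hom C (Cod C f) (Dom C f).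
        Comp C g f = Id C (Dom C f) \<and> Comp C f g = Id C (Cod C f))"

definition isomorphic :: "('o, 'm) cat \<Rightarrow> 'o \<Rightarrow> 'o \<Rightarrow> bool" where
  "isomorphic C X Y \<longleftrightarrow> (\<exists>f \<in> hom C X Y. is_iso C f)"

definition is_initial :: "('o, 'm) cat \<Rightarrow> 'o \<Rightarrow> bool" where
  "is_initial C Z \<longleftrightarrow> Z \<in> Obj C \<and> (\<forall>Y \<in> Obj C. \<exists>!f. f \<in> hom C Z Y)"

text \<open>A finite family is indexed by {..<n}. (S, \<iota>) is a coproduct of N_0,...,N_{n-1}
with coprojections \<iota> i : N i \<rightarrow> S. For n = 0 this says S is initial.\<close>

definition is_coproduct ::
  "('o, 'm) cat \<Rightarrow> nat \<Rightarrow> (nat \<Rightarrow> 'o) \<Rightarrow> 'o \<Rightarrow> (nat \<Rightarrow> 'm) \<Rightarrow> bool" where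
  "is_coproduct C n N S \<iota> \<longleftrightarrow>
     S \<in> Obj C \<and> (\<forall>i<n. N i \<in> Obj C \<and> \<iota> i \<in> hom C (N i) S) \<and>
     (\<forall>Y \<in> Obj C. \<forall>f. (\<forall>i<n. f i \<in> hom C (N i) Y) \<longrightarrow>
        (\<exists>!u. u \<in> hom C S Y \<and> (\<forall>i<n. Comp C u (\<iota> i) = f i)))"

definition has_finite_coproducts :: "('o, 'm) cat \<Rightarrow> bool" where
  "has_finite_coproducts C \<longleftrightarrow>
     (\<forall>n N. (\<forall>i<n. N i \<in> Obj C) \<longrightarrow> (\<exists>S \<iota>. is_coproduct C n N S \<iota>))"

definition connected :: "('o, 'm) cat \<Rightarrow> 'o \<Rightarrow> bool" where
  "connected C Y \<longleftrightarrow> Y \<in> Obj C \<and>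
     (\<forall>n N S \<iota>. is_coproduct C n N S \<iota> \<longrightarrow>
        bij_betw (\<lambda>(i, g). Comp C (\<iota> i) g) (SIGMA i:{..<n}. hom C Y (N i)) (hom C Y S))"

definition F_category :: "('o, 'm) cat \<Rightarrow> bool" where
  "F_category C \<longleftrightarrow> category C \<and> has_finite_coproducts C \<and>
     (\<forall>X \<in> Obj C. \<exists>n N S \<iota>. (\<forall>i<n. connected C (N i)) \<and>
        is_coproduct C n N S \<iota> \<and> isomorphic C X S)"

definition full_sub :: "('o, 'm) cat \<Rightarrow> ('o \<Rightarrow> bool) \<Rightarrow> ('o, 'm) cat" where
  "full_sub C P =
     \<lparr> Obj = {X \<in> Obj C. P X},
       Arr = {f \<in> Arr C. P (Dom C f) \<and> P (Cod C f)},
       Dom = Dom C, Cod = Cod C, Id = Id C, Comp = Comp C \<rparr>"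

definition connected_part :: "('o, 'm) cat \<Rightarrow> ('o, 'm) cat" where
  "connected_part C = full_sub C (connected C)"

definition sieve :: "('o, 'm) cat \<Rightarrow> 'o \<Rightarrow> 'm set \<Rightarrow> bool" where
  "sieve C X S \<longleftrightarrow> S \<subseteq> {f \<in> Arr C. Cod C f = X} \<and>
     (\<forall>f \<in> S. \<forall>g \<in> Arr C. Cod C g = Dom C f \<longrightarrow> Comp C f g \<in> S)"

definition pullback_sieve :: "('o, 'm) cat \<Rightarrow> 'm \<Rightarrow> 'm set \<Rightarrow> 'm set" where
  "pullback_sieve C f S = {g \<in> Arr C. Cod C g = Dom C f \<and> Comp C f g \<in> S}"

definition grothendieck_topology :: "('o, 'm) cat \<Rightarrow> ('o \<Rightarrow> 'm set set) \<Rightarrow> bool" where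
  "grothendieck_topology C J \<longleftrightarrow>
     (\<forall>X \<in> Obj C. \<forall>S \<in> J X. sieve C X S) \<and>
     (\<forall>X \<in> Obj C. {f \<in> Arr C. Cod C f = X} \<in> J X) \<and>
     (\<forall>X \<in> Obj C. \<forall>S \<in> J X. \<forall>f \<in> Arr C. Cod C f = X \<longrightarrow>
        pullback_sieve C f S \<in> J (Dom C f)) \<and>
     (\<forall>X \<in> Obj C. \<forall>S \<in> J X. \<forall>R. sieve C X R \<longrightarrow>
        (\<forall>f \<in> S. pullback_sieve C f R \<in> J (Dom C f)) \<longrightarrow> R \<in> J X)"

definition pushforward_incl ::
  "('o, 'm) cat \<Rightarrow> ('o, 'm) cat \<Rightarrow> ('o \<Rightarrow> 'm set set) \<Rightarrow> 'o \<Rightarrow> 'm set set" where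
  "pushforward_incl C D J X =
     {R. sieve C X R \<and>
         (\<forall>Y \<in> Obj D. \<forall>f \<in> hom C Y X.
            {g \<in> Arr D. Cod D g = Y \<and> Comp C f g \<in> R} \<in> J Y)}"

definition presheaf :: "('o, 'm) cat \<Rightarrow> ('o \<Rightarrow> 'v set) \<Rightarrow> ('m \<Rightarrow> 'v \<Rightarrow> 'v) \<Rightarrow> bool" where
  "presheaf C G Gm \<longleftrightarrow>
     (\<forall>f \<in> Arr C. \<forall>x \<in> G (Cod C f). Gm f x \<in> G (Dom C f)) \<and>
     (\<forall>X \<in> Obj C. \<forall>x \<in> G X. Gm (Id C X) x = x) \<and>
     (\<forall>f \<in> Arr C. \<forall>g \<in> Arr C. Cod C f = Dom C g \<longrightarrow>
        (\<forall>x \<in> G (Cod C g). Gm (Comp C g f) x = Gm f (Gm g x)))"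

definition is_sheaf ::
  "('o, 'm) cat \<Rightarrow> ('o \<Rightarrow> 'm set set) \<Rightarrow> ('o \<Rightarrow> 'v set) \<Rightarrow> ('m \<Rightarrow> 'v \<Rightarrow> 'v) \<Rightarrow> bool" where
  "is_sheaf C J G Gm \<longleftrightarrow>
     (\<forall>X \<in> Obj C. \<forall>S \<in> J X. \<forall>x.
        ((\<forall>f \<in> S. x f \<in> G (Dom C f)) \<and>
         (\<forall>f \<in> S. \<forall>g \<in> Arr C. Cod C g = Dom C f \<longrightarrow> x (Comp C f g) = Gm g (x f)))
        \<longrightarrow> (\<exists>!s. s \<in> G X \<and> (\<forall>f \<in> S. Gm f s = x f)))"

end

theory Submission
  imports Defs
begin

text \<open>Call an arrow k into X with connected domain a connected probe of X. In an F-category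
  every object is isomorphic to a coproduct of connected objects, and a probe into a coproduct
  factors uniquely through one coprojection. A sieve on X covers for the pushforward topology
  iff its pullback along every probe is J-covering, so a sheaf for it is separated by probes
  and glues compatible families of sections indexed by probes. Gluing along a J-covering sieve
  gives (a); gluing the family \<iota> i \<cdot> g \<mapsto> G(g)(t i) gives (c), and (b) is the
  empty coproduct. Conversely, (c) applied to a decomposition X \<cong> \<Coprod> N_i shows that sections
  over X are exactly the compatible probe families, and (a) turns a matching family on a covering
  sieve into such a probe family.\<close>

section \<open>Categories, sieves and presheaves\<close>

lemma mem_hom: "f \<in> hom C X Y \<longleftrightarrow> f \<in> Arr C \<and> Dom C f = X \<and> Cod C f = Y"
  by (simp add: hom_def)

lemma homI: "f \<in> Arr C \<Longrightarrow> f \<in> hom C (Dom C f) (Cod C f)"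
  by (simp add: hom_def)

locale small_category =
  fixes C :: "('o, 'm) cat"
  assumes category: "category C"
begin

abbreviation cat_comp :: "'m \<Rightarrow> 'm \<Rightarrow> 'm" (infixl "\<cdot>" 70) where
  "g \<cdot> f \<equiv> Comp C g f"

lemma dom_in_Obj: "f \<in> Arr C \<Longrightarrow> Dom C f \<in> Obj C"
  using category by (simp add: category_def)

lemma comp_in_hom: "f \<in> hom C X Y \<Longrightarrow> g \<in> hom C Y Z \<Longrightarrow> g \<cdot> f \<in> hom C X Z"
proof -
  assume "f \<in> hom C X Y" "g \<in> hom C Y Z"
  moreover have "\<forall>f \<in> Arr C. \<forall>g \<in> Arr C. Cod C f = Dom C g \<longrightarrow> g \<cdot> f \<in> hom C (Dom C f) (Cod C g)"
    using category by (simp add: category_def)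
  ultimately show ?thesis
    by (simp add: mem_hom)
qed

lemma comp_id_left: "f \<in> hom C X Y \<Longrightarrow> Id C Y \<cdot> f = f"
  using category by (auto simp: category_def mem_hom)

lemma comp_assoc:
  assumes "f \<in> hom C W X" "g \<in> hom C X Y" "h \<in> hom C Y Z"
  shows "h \<cdot> (g \<cdot> f) = (h \<cdot> g) \<cdot> f"
proof -
  have "\<forall>f \<in> Arr C. \<forall>g \<in> Arr C. \<forall>h \<in> Arr C.
      Cod C f = Dom C g \<longrightarrow> Cod C g = Dom C h \<longrightarrow> h \<cdot> (g \<cdot> f) = (h \<cdot> g) \<cdot> f"
    using category by (simp add: category_def)
  then show ?thesis
    using assms by (simp add: mem_hom)
qed

end

lemma connected_factor:
  assumes "connected C Y" "is_coproduct C n N S \<iota>" "h \<in> hom C Y S"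
  obtains i g where "i < n" "g \<in> hom C Y (N i)" "h = Comp C (\<iota> i) g"
proof -
  have "bij_betw (\<lambda>(i, g). Comp C (\<iota> i) g) (SIGMA i:{..<n}. hom C Y (N i)) (hom C Y S)"
    using assms(1,2) unfolding connected_def by blast
  then show ?thesis
    using assms(3) that unfolding bij_betw_def by fastforce
qed

lemma topology_superset_covering:
  assumes "category C" "grothendieck_topology C J" "X \<in> Obj C"
    and "S \<in> J X" "sieve C X R" "S \<subseteq> R"
  shows "R \<in> J X"
proof -
  note top = assms(2)[unfolded grothendieck_topology_def]
  have "pullback_sieve C f R \<in> J (Dom C f)" if "f \<in> S" for f
  proof -
    have "sieve C X S"
      using top assms(3,4) by blast
    then have f: "f \<in> Arr C" "\<forall>g \<in> Arr C. Cod C g = Dom C f \<longrightarrow> Comp C f g \<in> S"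
      using that unfolding sieve_def by blast+
    then have "pullback_sieve C f R = {g \<in> Arr C. Cod C g = Dom C f}"
      using assms(6) unfolding pullback_sieve_def by blast
    moreover have "Dom C f \<in> Obj C"
      using assms(1) f(1) unfolding category_def by blast
    ultimately show ?thesis
      using top by simp
  qed
  then show ?thesis
    using top assms(3-5) by blast
qed

lemma full_sub_simps [simp]:
  "Obj (full_sub C P) = {X \<in> Obj C. P X}"
  "Arr (full_sub C P) = {f \<in> Arr C. P (Dom C f) \<and> P (Cod C f)}"
  "Dom (full_sub C P) = Dom C" "Cod (full_sub C P) = Cod C"
  "Id (full_sub C P) = Id C" "Comp (full_sub C P) = Comp C"
  by (simp_all add: full_sub_def)

lemma category_full_sub:
  assumes "category C"
  shows "category (full_sub C P)"
proof -
  note ax = assms[unfolded category_def hom_def]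
  show ?thesis
    unfolding category_def hom_def full_sub_simps
  proof (intro conjI)
  qed (use ax in \<open>simp_all\<close>)
qed

lemma sieve_arr: "sieve C X R \<Longrightarrow> f \<in> R \<Longrightarrow> f \<in> hom C (Dom C f) X"
  by (auto simp: sieve_def mem_hom)

lemma sieve_comp: "sieve C X R \<Longrightarrow> f \<in> R \<Longrightarrow> g \<in> hom C Y (Dom C f) \<Longrightarrow> Comp C f g \<in> R"
  by (auto simp: sieve_def mem_hom)

definition matching_family ::
  "('o, 'm) cat \<Rightarrow> ('o \<Rightarrow> 'v set) \<Rightarrow> ('m \<Rightarrow> 'v \<Rightarrow> 'v) \<Rightarrow> 'm set \<Rightarrow> ('m \<Rightarrow> 'v) \<Rightarrow> bool" where
  "matching_family C G Gm R x \<longleftrightarrow>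
     (\<forall>f \<in> R. x f \<in> G (Dom C f)) \<and>
     (\<forall>f \<in> R. \<forall>g \<in> Arr C. Cod C g = Dom C f \<longrightarrow> x (Comp C f g) = Gm g (x f))"

lemma is_sheaf_iff:
  "is_sheaf C J G Gm \<longleftrightarrow>
     (\<forall>X \<in> Obj C. \<forall>S \<in> J X. \<forall>x. matching_family C G Gm S x \<longrightarrow>
        (\<exists>!s. s \<in> G X \<and> (\<forall>f \<in> S. Gm f s = x f)))"
  by (simp add: is_sheaf_def matching_family_def)

lemma is_sheafD:
  assumes "is_sheaf C J G Gm" "X \<in> Obj C" "S \<in> J X" "matching_family C G Gm S x"
  shows "\<exists>!s. s \<in> G X \<and> (\<forall>f \<in> S. Gm f s = x f)"
  using assms(1)[unfolded is_sheaf_iff] assms(2-4) by simp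

locale presheaf_on = small_category C
  for C :: "('o, 'm) cat" +
  fixes G :: "'o \<Rightarrow> 'v set" and Gm :: "'m \<Rightarrow> 'v \<Rightarrow> 'v"
  assumes presheaf: "presheaf C G Gm"
begin

lemma restrict_in: "f \<in> hom C X Y \<Longrightarrow> x \<in> G Y \<Longrightarrow> Gm f x \<in> G X"
  using presheaf unfolding presheaf_def mem_hom by blast

lemma restrict_id: "X \<in> Obj C \<Longrightarrow> x \<in> G X \<Longrightarrow> Gm (Id C X) x = x"
  using presheaf unfolding presheaf_def by blast

lemma restrict_comp:
  assumes "f \<in> hom C X Y" "g \<in> hom C Y Z" "x \<in> G Z"
  shows "Gm (g \<cdot> f) x = Gm f (Gm g x)"
proof -
  have "\<forall>f \<in> Arr C. \<forall>g \<in> Arr C. Cod C f = Dom C g \<longrightarrow>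
      (\<forall>x \<in> G (Cod C g). Gm (g \<cdot> f) x = Gm f (Gm g x))"
    using presheaf by (simp add: presheaf_def)
  then show ?thesis
    using assms by (simp add: mem_hom)
qed

lemma restrict_retraction:
  assumes "\<phi> \<in> hom C X Y" "\<psi> \<in> hom C Y X" "\<psi> \<cdot> \<phi> = Id C X" "x \<in> G X"
  shows "Gm \<phi> (Gm \<psi> x) = x"
proof -
  have "X \<in> Obj C"
    using assms(1) dom_in_Obj by (auto simp: mem_hom)
  then show ?thesis
    using restrict_comp[OF assms(1,2,4)] restrict_id assms(3,4) by simp
qed

lemma matching_family_restrictions:
  assumes "sieve C X R" "v \<in> G X"
  shows "matching_family C G Gm R (\<lambda>f. Gm f v)"
  unfolding matching_family_def
proof (intro conjI ballI impI)
  fix f assume "f \<in> R"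
  then show "Gm f v \<in> G (Dom C f)"
    using restrict_in[OF sieve_arr[OF assms(1)] assms(2)] by blast
next
  fix f g assume "f \<in> R" "g \<in> Arr C" "Cod C g = Dom C f"
  then show "Gm (f \<cdot> g) v = Gm g (Gm f v)"
    using restrict_comp[OF _ sieve_arr[OF assms(1)] assms(2)] homI by metis
qed

lemma equalizer_sieve:
  assumes "v \<in> G X" "w \<in> G X"
  shows "sieve C X {f \<in> Arr C. Cod C f = X \<and> Gm f v = Gm f w}" (is "sieve C X ?E")
  unfolding sieve_def
proof (intro conjI ballI impI)
  show "?E \<subseteq> {f \<in> Arr C. Cod C f = X}"
    by blast
next
  fix f g assume f: "f \<in> ?E" and g: "g \<in> Arr C" "Cod C g = Dom C f"
  have fg: "f \<in> hom C (Dom C f) X" "g \<in> hom C (Dom C g) (Dom C f)"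
    using f g by (auto simp: mem_hom)
  then have "Gm (f \<cdot> g) v = Gm (f \<cdot> g) w"
    using f restrict_comp[OF fg(2,1)] assms by simp
  then show "f \<cdot> g \<in> ?E"
    using comp_in_hom[OF fg(2,1)] by (simp add: mem_hom)
qed

lemma sheaf_eqI:
  assumes "is_sheaf C K G Gm" "X \<in> Obj C" "R \<in> K X" "sieve C X R"
    and "v \<in> G X" "w \<in> G X" "\<forall>f \<in> R. Gm f v = Gm f w"
  shows "v = w"
  using is_sheafD[OF assms(1-3) matching_family_restrictions[OF assms(4,5)]] assms(5-7) by auto

end

section \<open>The connected site of an F-category\<close>

lemma coprojection_in_hom: "is_coproduct C n N S \<iota> \<Longrightarrow> i < n \<Longrightarrow> \<iota> i \<in> hom C (N i) S"
  by (simp add: is_coproduct_def)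

locale F_site =
  fixes F :: "('o, 'm) cat" and J :: "'o \<Rightarrow> 'm set set"
  assumes F_category: "F_category F"
    and topology: "grothendieck_topology (connected_part F) J"
begin

sublocale small_category F
  using F_category by unfold_locales (simp add: F_category_def)

notation cat_comp (infixl "\<cdot>" 70)

lemma connected_in_Obj: "connected F X \<Longrightarrow> X \<in> Obj F"
  by (simp add: connected_def)

lemma connected_part_simps [simp]:
  "Obj (connected_part F) = {X. connected F X}"
  "Arr (connected_part F) = {f \<in> Arr F. connected F (Dom F f) \<and> connected F (Cod F f)}"
  "Dom (connected_part F) = Dom F" "Cod (connected_part F) = Cod F"
  "Id (connected_part F) = Id F" "Comp (connected_part F) = Comp F"
  by (auto simp: connected_part_def connected_in_Obj)

lemma covering_sieve: "connected F X \<Longrightarrow> S \<in> J X \<Longrightarrow> sieve (connected_part F) X S"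
  using topology unfolding grothendieck_topology_def by simp

lemma maximal_covering:
  "connected F X \<Longrightarrow> {f \<in> Arr (connected_part F). Cod F f = X} \<in> J X"
  using topology unfolding grothendieck_topology_def by simp

lemma pullback_covering:
  assumes "connected F X" "S \<in> J X" "connected F Y" "h \<in> hom F Y X"
  shows "pullback_sieve (connected_part F) h S \<in> J Y"
proof -
  have "\<forall>X \<in> Obj (connected_part F). \<forall>S \<in> J X. \<forall>f \<in> Arr (connected_part F).
      Cod (connected_part F) f = X \<longrightarrow> pullback_sieve (connected_part F) f S \<in> J (Dom (connected_part F) f)"
    using topology unfolding grothendieck_topology_def by blast
  then show ?thesis
    using assms by (auto simp: mem_hom)
qed

lemma covering_superset:
  "connected F X \<Longrightarrow> S \<in> J X \<Longrightarrow> sieve (connected_part F) X R \<Longrightarrow> S \<subseteq> R \<Longrightarrow> R \<in> J X"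
  using topology_superset_covering[OF
      category_full_sub[OF category, of "connected F", folded connected_part_def] topology]
  by simp

definition connected_probes :: "'o \<Rightarrow> 'm set" where
  "connected_probes X = {k \<in> Arr F. Cod F k = X \<and> connected F (Dom F k)}"

lemma mem_connected_probes:
  "k \<in> connected_probes X \<longleftrightarrow> connected F (Dom F k) \<and> k \<in> hom F (Dom F k) X"
  by (auto simp: connected_probes_def mem_hom)

lemma probe_comp:
  "k \<in> connected_probes Y \<Longrightarrow> g \<in> hom F Y X \<Longrightarrow> g \<cdot> k \<in> connected_probes X"
  using comp_in_hom by (auto simp: mem_connected_probes mem_hom)

definition probe_sieve :: "'o \<Rightarrow> 'm set \<Rightarrow> bool" where
  "probe_sieve X T \<longleftrightarrow> T \<subseteq> connected_probes X \<and> (\<forall>k \<in> T. \<forall>c \<in> connected_probes (Dom F k). k \<cdot> c \<in> T)"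

lemma probe_sieve_connected_probes: "probe_sieve X (connected_probes X)"
  unfolding probe_sieve_def using probe_comp by (auto simp: mem_connected_probes)

lemma pullback_connected_probes:
  assumes "k \<in> connected_probes X"
  shows "pullback_sieve (connected_part F) k (connected_probes X) \<in> J (Dom F k)"
proof -
  have "pullback_sieve (connected_part F) k (connected_probes X) =
      {f \<in> Arr (connected_part F). Cod F f = Dom F k}"
    using assms probe_comp by (auto simp: pullback_sieve_def connected_probes_def mem_hom)
  then show ?thesis
    using maximal_covering assms by (simp add: mem_connected_probes)
qed

lemma matching_probe_familyD:
  assumes "matching_family (connected_part F) G Gm T y" "T \<subseteq> connected_probes X" "k \<in> T"
  shows "y k \<in> G (Dom F k)"
    and "c \<in> connected_probes (Dom F k) \<Longrightarrow> y (k \<cdot> c) = Gm c (y k)"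
  using assms by (auto simp: matching_family_def connected_probes_def)

lemma pushforward_covering_iff:
  "R \<in> pushforward_incl F (connected_part F) J X \<longleftrightarrow>
     sieve F X R \<and> (\<forall>k \<in> connected_probes X. pullback_sieve (connected_part F) k R \<in> J (Dom F k))"
  unfolding pushforward_incl_def pullback_sieve_def connected_probes_def
  by (auto simp: mem_hom)

lemma sieve_pullback_probe:
  assumes "sieve F X R" "k \<in> connected_probes X"
  shows "sieve (connected_part F) (Dom F k) (pullback_sieve (connected_part F) k R)"
  unfolding sieve_def
proof (intro conjI ballI impI)
  fix g c assume g: "g \<in> pullback_sieve (connected_part F) k R"
    and c: "c \<in> Arr (connected_part F)" "Cod (connected_part F) c = Dom (connected_part F) g"
  have hom: "c \<in> hom F (Dom F c) (Dom F g)" "g \<in> hom F (Dom F g) (Dom F k)"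
    "k \<in> hom F (Dom F k) X"
    using g c assms(2) by (auto simp: mem_hom mem_connected_probes pullback_sieve_def)
  have "k \<cdot> g \<in> R" "k \<cdot> g \<in> hom F (Dom F g) X"
    using g comp_in_hom[OF hom(2,3)] by (auto simp: pullback_sieve_def)
  then have "k \<cdot> (g \<cdot> c) \<in> R"
    using sieve_comp[OF assms(1), of "k \<cdot> g" c] hom comp_assoc[OF hom] by (simp add: mem_hom)
  then show "Comp (connected_part F) g c \<in> pullback_sieve (connected_part F) k R"
    using comp_in_hom[OF hom(1,2)] g c by (auto simp: mem_hom pullback_sieve_def)
qed (auto simp: pullback_sieve_def)

lemma pushforward_coveringI:
  assumes "sieve F X R"
    and "\<And>k. k \<in> connected_probes X \<Longrightarrow> \<exists>S \<in> J (Dom F k). S \<subseteq> pullback_sieve (connected_part F) k R"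
  shows "R \<in> pushforward_incl F (connected_part F) J X"
  unfolding pushforward_covering_iff
  using assms covering_superset sieve_pullback_probe by (metis mem_connected_probes)

lemma decomposition:
  assumes "X \<in> Obj F"
  obtains n N S \<iota> \<phi> \<psi> where "\<forall>i<n. connected F (N i)" "is_coproduct F n N S \<iota>"
    "\<phi> \<in> hom F X S" "\<psi> \<in> hom F S X" "\<psi> \<cdot> \<phi> = Id F X"
proof -
  obtain n N S \<iota> where "\<forall>i<n. connected F (N i)" "is_coproduct F n N S \<iota>" "isomorphic F X S"
    using F_category assms unfolding F_category_def by blast
  moreover from \<open>isomorphic F X S\<close> obtain \<phi> \<psi> where
    "\<phi> \<in> hom F X S" "\<psi> \<in> hom F S X" "\<psi> \<cdot> \<phi> = Id F X"
    unfolding isomorphic_def is_iso_def by (auto simp: mem_hom)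
  ultimately show ?thesis
    using that by blast
qed

end

locale F_site_presheaf = F_site F J + presheaf_on F G Gm
  for F :: "('o, 'm) cat" and J :: "'o \<Rightarrow> 'm set set"
    and G :: "'o \<Rightarrow> 'v set" and Gm :: "'m \<Rightarrow> 'v \<Rightarrow> 'v"
begin

definition extends_family :: "'m set \<Rightarrow> ('m \<Rightarrow> 'v) \<Rightarrow> 'm \<Rightarrow> 'v \<Rightarrow> bool" where
  "extends_family T y f u \<longleftrightarrow> u \<in> G (Dom F f) \<and>
     (\<forall>k \<in> connected_probes (Dom F f). f \<cdot> k \<in> T \<and> Gm k u = y (f \<cdot> k))"

lemma extends_family_restrict:
  assumes "extends_family T y f u" "f \<in> Arr F" "g \<in> hom F Z (Dom F f)"
  shows "extends_family T y (f \<cdot> g) (Gm g u)"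
proof -
  have f: "f \<in> hom F (Dom F f) (Cod F f)"
    using assms(2) by (rule homI)
  have "(f \<cdot> g) \<cdot> k \<in> T \<and> Gm k (Gm g u) = y ((f \<cdot> g) \<cdot> k)" if k: "k \<in> connected_probes Z" for k
  proof -
    have kh: "k \<in> hom F (Dom F k) Z"
      using k by (simp add: mem_connected_probes)
    have "g \<cdot> k \<in> connected_probes (Dom F f)"
      using probe_comp[OF k assms(3)] .
    moreover have "(f \<cdot> g) \<cdot> k = f \<cdot> (g \<cdot> k)"
      using comp_assoc[OF kh assms(3) f] by simp
    moreover have "Gm k (Gm g u) = Gm (g \<cdot> k) u"
      using restrict_comp[OF kh assms(3)] assms(1) by (simp add: extends_family_def)
    ultimately show ?thesis
      using assms(1) unfolding extends_family_def by simp
  qed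
  moreover have "Dom F (f \<cdot> g) = Z" "Gm g u \<in> G Z"
    using comp_in_hom[OF assms(3) f] restrict_in[OF assms(3)] assms(1)
    by (auto simp: mem_hom extends_family_def)
  ultimately show ?thesis
    unfolding extends_family_def by simp
qed

lemma extends_family_self:
  assumes "probe_sieve X T" "matching_family (connected_part F) G Gm T y" "k \<in> T"
  shows "extends_family T y k (y k)"
  using assms matching_probe_familyD[OF assms(2) _ assms(3)]
  unfolding extends_family_def probe_sieve_def by auto

text \<open>A connected probe into S is \<iota> i \<cdot> g for unique i and g, so a tuple t of sections
  determines the family \<iota> i \<cdot> g \<mapsto> Gm g (t i).\<close>

lemma coproduct_probe_family:
  assumes cp: "is_coproduct F n N S \<iota>" and t: "t \<in> (\<Pi>\<^sub>E i\<in>{..<n}. G (N i))"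
  obtains y where "\<And>W i g. connected F W \<Longrightarrow> i < n \<Longrightarrow> g \<in> hom F W (N i) \<Longrightarrow>
      y (\<iota> i \<cdot> g) = Gm g (t i)"
    and "matching_family (connected_part F) G Gm (connected_probes S) y"
proof
  note \<iota> = coprojection_in_hom[OF cp]
  define factor where "factor k =
    the_inv_into (SIGMA i:{..<n}. hom F (Dom F k) (N i)) (\<lambda>(i, g). \<iota> i \<cdot> g) k" for k
  define y where "y k = Gm (snd (factor k)) (t (fst (factor k)))" for k
  show y_eq: "y (\<iota> i \<cdot> g) = Gm g (t i)"
    if W: "connected F W" and i: "i < n" and g: "g \<in> hom F W (N i)" for W i g
  proof -
    have "Dom F (\<iota> i \<cdot> g) = W"
      using comp_in_hom[OF g \<iota>[OF i]] by (simp add: mem_hom)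
    moreover have "inj_on (\<lambda>(i, g). \<iota> i \<cdot> g) (SIGMA i:{..<n}. hom F W (N i))"
      using W cp unfolding connected_def bij_betw_def by blast
    ultimately have "factor (\<iota> i \<cdot> g) = (i, g)"
      unfolding factor_def using the_inv_into_f_f i g by fastforce
    then show ?thesis
      by (simp add: y_def)
  qed
  show "matching_family (connected_part F) G Gm (connected_probes S) y"
    unfolding matching_family_def
  proof (intro conjI ballI impI)
    fix k assume "k \<in> connected_probes S"
    then obtain i g where ig: "i < n" "g \<in> hom F (Dom F k) (N i)" "k = \<iota> i \<cdot> g"
      and W: "connected F (Dom F k)"
      using connected_factor[OF _ cp] by (metis mem_connected_probes)
    have "y k = Gm g (t i)"
      using y_eq[OF W ig(1,2)] ig(3) by simp
    then show "y k \<in> G (Dom (connected_part F) k)"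
      using restrict_in[OF ig(2)] t ig(1) by auto
  next
    fix k c assume "k \<in> connected_probes S"
      and c: "c \<in> Arr (connected_part F)" "Cod (connected_part F) c = Dom (connected_part F) k"
    then obtain i g where ig: "i < n" "g \<in> hom F (Dom F k) (N i)" "k = \<iota> i \<cdot> g"
      and W: "connected F (Dom F k)"
      using connected_factor[OF _ cp] by (metis mem_connected_probes)
    from c have ch: "c \<in> hom F (Dom F c) (Dom F k)" and Wc: "connected F (Dom F c)"
      by (auto simp: mem_hom)
    have "Comp (connected_part F) k c = \<iota> i \<cdot> (g \<cdot> c)"
      using comp_assoc[OF ch ig(2) \<iota>[OF ig(1)]] ig(3) by simp
    then show "y (Comp (connected_part F) k c) = Gm c (y k)"
      using y_eq[OF Wc ig(1) comp_in_hom[OF ch ig(2)]] y_eq[OF W ig(1,2)] ig(3)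
        restrict_comp[OF ch ig(2)] t ig(1) by auto
  qed
qed

end

section \<open>Sheaves for the pushforward topology\<close>

locale pushforward_sheaf = F_site_presheaf +
  assumes sheaf: "is_sheaf F (pushforward_incl F (connected_part F) J) G Gm"
begin

lemma eq_if_locally_eq:
  assumes "X \<in> Obj F" "v \<in> G X" "w \<in> G X"
    and "\<And>k. k \<in> connected_probes X \<Longrightarrow> \<exists>S \<in> J (Dom F k). \<forall>g \<in> S. Gm (k \<cdot> g) v = Gm (k \<cdot> g) w"
  shows "v = w"
proof (rule sheaf_eqI[OF sheaf assms(1) _ equalizer_sieve[OF assms(2,3)] assms(2,3)])
  let ?E = "{f \<in> Arr F. Cod F f = X \<and> Gm f v = Gm f w}"
  show "?E \<in> pushforward_incl F (connected_part F) J X"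
  proof (rule pushforward_coveringI[OF equalizer_sieve[OF assms(2,3)]])
    fix k assume k: "k \<in> connected_probes X"
    then obtain S where S: "S \<in> J (Dom F k)" "\<forall>g \<in> S. Gm (k \<cdot> g) v = Gm (k \<cdot> g) w"
      using assms(4) by blast
    have "g \<in> pullback_sieve (connected_part F) k ?E" if "g \<in> S" for g
    proof -
      have "g \<in> Arr (connected_part F)" "Cod F g = Dom F k"
        using covering_sieve[OF _ S(1)] k that by (auto simp: sieve_def mem_connected_probes)
      then show ?thesis
        using comp_in_hom[OF homI[of g]] k S(2) that
        by (auto simp: pullback_sieve_def mem_connected_probes mem_hom)
    qed
    then show "\<exists>S \<in> J (Dom F k). S \<subseteq> pullback_sieve (connected_part F) k ?E"
      using S(1) by blast
  qed
qed auto

lemma eq_if_probes_eq: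
  assumes "X \<in> Obj F" "v \<in> G X" "w \<in> G X" "\<forall>k \<in> connected_probes X. Gm k v = Gm k w"
  shows "v = w"
proof (rule eq_if_locally_eq[OF assms(1-3)])
  fix k assume k: "k \<in> connected_probes X"
  let ?S = "{f \<in> Arr (connected_part F). Cod F f = Dom F k}"
  have "k \<cdot> g \<in> connected_probes X" if "g \<in> ?S" for g
  proof -
    have "g \<in> connected_probes (Dom F k)"
      using that by (auto simp: connected_probes_def)
    moreover have "k \<in> hom F (Dom F k) X"
      using k by (simp add: mem_connected_probes)
    ultimately show ?thesis
      by (rule probe_comp)
  qed
  moreover have "?S \<in> J (Dom F k)"
    using maximal_covering k by (simp add: mem_connected_probes)
  ultimately show "\<exists>S \<in> J (Dom F k). \<forall>g \<in> S. Gm (k \<cdot> g) v = Gm (k \<cdot> g) w"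
    using assms(4) by blast
qed

lemma extends_family_unique:
  assumes "f \<in> Arr F" "extends_family T y f u" "extends_family T y f u'"
  shows "u = u'"
  using assms by (intro eq_if_probes_eq[OF dom_in_Obj]) (auto simp: extends_family_def)

text \<open>The amalgamation lives on the sieve of all arrows f into X along which the family
  already extends; by uniqueness of extensions this sieve carries a matching family.\<close>

lemma glue_probe_family:
  assumes X: "X \<in> Obj F" and T: "probe_sieve X T"
    and y: "matching_family (connected_part F) G Gm T y"
    and cover: "\<forall>k \<in> connected_probes X. pullback_sieve (connected_part F) k T \<in> J (Dom F k)"
  shows "\<exists>v \<in> G X. \<forall>k \<in> T. Gm k v = y k"
proof -
  define R where "R = {f \<in> Arr F. Cod F f = X \<and> (\<exists>u. extends_family T y f u)}"
  define x where "x f = (THE u. extends_family T y f u)" for f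
  have x_eq: "x f = u" if "f \<in> Arr F" "extends_family T y f u" for f u
    unfolding x_def using that extends_family_unique by blast
  have R_hom: "f \<in> hom F (Dom F f) X" and x: "extends_family T y f (x f)" if "f \<in> R" for f
    using that x_eq unfolding R_def by (auto simp: mem_hom)
  have T_R: "T \<subseteq> R" and y_extends: "\<And>k. k \<in> T \<Longrightarrow> extends_family T y k (y k)"
    using T extends_family_self[OF T y] by (auto simp: R_def probe_sieve_def connected_probes_def)
  have R_comp: "f \<cdot> g \<in> R" and x_comp: "x (f \<cdot> g) = Gm g (x f)"
    if f: "f \<in> R" and g: "g \<in> Arr F" "Cod F g = Dom F f" for f g
  proof -
    have gh: "g \<in> hom F (Dom F g) (Dom F f)"
      using g by (simp add: mem_hom)
    have ext: "extends_family T y (f \<cdot> g) (Gm g (x f))"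
      using extends_family_restrict[OF x[OF f] _ gh] R_hom[OF f] by (simp add: mem_hom)
    moreover have fg: "f \<cdot> g \<in> hom F (Dom F g) X"
      using comp_in_hom[OF gh R_hom[OF f]] .
    ultimately show "f \<cdot> g \<in> R"
      unfolding R_def by (auto simp: mem_hom)
    show "x (f \<cdot> g) = Gm g (x f)"
      using x_eq ext fg by (simp add: mem_hom)
  qed
  have R: "sieve F X R"
    using R_comp R_hom unfolding sieve_def by (auto simp: mem_hom)
  have "R \<in> pushforward_incl F (connected_part F) J X"
  proof (rule pushforward_coveringI[OF R])
    fix k assume "k \<in> connected_probes X"
    moreover have "pullback_sieve (connected_part F) k T \<subseteq> pullback_sieve (connected_part F) k R"
      using T_R by (auto simp: pullback_sieve_def)
    ultimately show "\<exists>S \<in> J (Dom F k). S \<subseteq> pullback_sieve (connected_part F) k R"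
      using cover by blast
  qed
  moreover have "matching_family F G Gm R x"
    using x x_comp by (simp add: matching_family_def extends_family_def)
  ultimately obtain v where "v \<in> G X" "\<forall>f \<in> R. Gm f v = x f"
    using is_sheafD[OF sheaf X] by blast
  moreover have "x k = y k" if "k \<in> T" for k
    using x_eq y_extends that T_R unfolding R_def by blast
  ultimately show ?thesis
    using T_R by (metis subsetD)
qed

lemma restriction_is_sheaf: "is_sheaf (connected_part F) J G Gm"
  unfolding is_sheaf_iff
proof (intro ballI allI impI)
  fix X S x
  assume X: "X \<in> Obj (connected_part F)" and S: "S \<in> J X"
    and x: "matching_family (connected_part F) G Gm S x"
  have conn: "connected F X"
    using X by simp
  have sieve: "sieve (connected_part F) X S"
    using covering_sieve[OF conn S] .
  then have "probe_sieve X S"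
    by (auto simp: probe_sieve_def sieve_def connected_probes_def)
  moreover have pb: "pullback_sieve (connected_part F) k S \<in> J (Dom F k)" if "k \<in> connected_probes X" for k
    using pullback_covering[OF conn S] that by (simp add: mem_connected_probes)
  ultimately obtain v where v: "v \<in> G X" "\<forall>k \<in> S. Gm k v = x k"
    using glue_probe_family[OF connected_in_Obj[OF conn] _ x] by blast
  have "s = v" if s: "s \<in> G X" "\<forall>k \<in> S. Gm k s = x k" for s
  proof (rule eq_if_locally_eq[OF connected_in_Obj[OF conn] s(1) v(1)])
    fix k assume "k \<in> connected_probes X"
    moreover have "\<forall>g \<in> pullback_sieve (connected_part F) k S. Gm (k \<cdot> g) s = Gm (k \<cdot> g) v"
      using s(2) v(2) by (simp add: pullback_sieve_def)
    ultimately show "\<exists>S' \<in> J (Dom F k). \<forall>g \<in> S'. Gm (k \<cdot> g) s = Gm (k \<cdot> g) v"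
      using pb by blast
  qed
  then show "\<exists>!s. s \<in> G X \<and> (\<forall>f \<in> S. Gm f s = x f)"
    using v by blast
qed

lemma coproduct_sections_inj:
  assumes cp: "is_coproduct F n N S \<iota>" and v: "v \<in> G S" and w: "w \<in> G S"
    and eq: "\<forall>i<n. Gm (\<iota> i) v = Gm (\<iota> i) w"
  shows "v = w"
proof (rule eq_if_probes_eq[OF _ v w])
  show "S \<in> Obj F"
    using cp by (simp add: is_coproduct_def)
  show "\<forall>k \<in> connected_probes S. Gm k v = Gm k w"
  proof
    fix k assume "k \<in> connected_probes S"
    then obtain i g where ig: "i < n" "g \<in> hom F (Dom F k) (N i)" "k = \<iota> i \<cdot> g"
      using connected_factor[OF _ cp] by (metis mem_connected_probes)
    then show "Gm k v = Gm k w"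
      using restrict_comp[OF ig(2) coprojection_in_hom[OF cp ig(1)]] v w eq by simp
  qed
qed

lemma coproduct_sections_surj:
  assumes cp: "is_coproduct F n N S \<iota>" and t: "t \<in> (\<Pi>\<^sub>E i\<in>{..<n}. G (N i))"
  shows "\<exists>v \<in> G S. \<forall>i<n. Gm (\<iota> i) v = t i"
proof -
  obtain y where y_eq: "\<And>W i g. connected F W \<Longrightarrow> i < n \<Longrightarrow> g \<in> hom F W (N i) \<Longrightarrow>
      y (\<iota> i \<cdot> g) = Gm g (t i)"
    and y: "matching_family (connected_part F) G Gm (connected_probes S) y"
    using coproduct_probe_family[OF cp t] by blast
  have S: "S \<in> Obj F" and N: "\<And>i. i < n \<Longrightarrow> N i \<in> Obj F"
    using cp by (auto simp: is_coproduct_def)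
  note \<iota> = coprojection_in_hom[OF cp]
  obtain v where v: "v \<in> G S" "\<forall>k \<in> connected_probes S. Gm k v = y k"
    using glue_probe_family[OF S probe_sieve_connected_probes y] pullback_connected_probes by blast
  have "Gm (\<iota> i) v = t i" if i: "i < n" for i
  proof (rule eq_if_probes_eq[OF N[OF i] restrict_in[OF \<iota>[OF i] v(1)]])
    show "t i \<in> G (N i)"
      using t i by auto
    show "\<forall>k \<in> connected_probes (N i). Gm k (Gm (\<iota> i) v) = Gm k (t i)"
    proof
      fix k assume k: "k \<in> connected_probes (N i)"
      then have kh: "k \<in> hom F (Dom F k) (N i)" and W: "connected F (Dom F k)"
        by (simp_all add: mem_connected_probes)
      have "Gm k (Gm (\<iota> i) v) = Gm (\<iota> i \<cdot> k) v"
        using restrict_comp[OF kh \<iota>[OF i] v(1)] by simp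
      also have "\<dots> = y (\<iota> i \<cdot> k)"
        using v(2) probe_comp[OF k \<iota>[OF i]] by blast
      also have "\<dots> = Gm k (t i)"
        using y_eq[OF W i kh] .
      finally show "Gm k (Gm (\<iota> i) v) = Gm k (t i)" .
    qed
  qed
  then show ?thesis
    using v(1) by blast
qed

lemma coproduct_sections_bij:
  assumes cp: "is_coproduct F n N S \<iota>"
  shows "bij_betw (\<lambda>v. \<lambda>i\<in>{..<n}. Gm (\<iota> i) v) (G S) (\<Pi>\<^sub>E i\<in>{..<n}. G (N i))"
  unfolding bij_betw_def
proof (intro conjI inj_onI equalityI subsetI)
  fix v w assume "v \<in> G S" "w \<in> G S"
    and eq: "(\<lambda>i\<in>{..<n}. Gm (\<iota> i) v) = (\<lambda>i\<in>{..<n}. Gm (\<iota> i) w)"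
  have "Gm (\<iota> i) v = Gm (\<iota> i) w" if "i < n" for i
    using fun_cong[OF eq, of i] that by simp
  then show "v = w"
    using coproduct_sections_inj[OF cp \<open>v \<in> G S\<close> \<open>w \<in> G S\<close>] by blast
next
  fix u assume "u \<in> (\<lambda>v. \<lambda>i\<in>{..<n}. Gm (\<iota> i) v) ` G S"
  then obtain v where "v \<in> G S" "u = (\<lambda>i\<in>{..<n}. Gm (\<iota> i) v)"
    by blast
  then show "u \<in> (\<Pi>\<^sub>E i\<in>{..<n}. G (N i))"
    using restrict_in[OF coprojection_in_hom[OF cp]] by (auto simp: restrict_PiE_iff)
next
  fix t assume t: "t \<in> (\<Pi>\<^sub>E i\<in>{..<n}. G (N i))"
  then obtain v where "v \<in> G S" "\<forall>i<n. Gm (\<iota> i) v = t i"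
    using coproduct_sections_surj[OF cp] by blast
  moreover have "(\<lambda>i\<in>{..<n}. Gm (\<iota> i) v) = t"
    using calculation t by (auto simp: PiE_def extensional_def)
  ultimately show "t \<in> (\<lambda>v. \<lambda>i\<in>{..<n}. Gm (\<iota> i) v) ` G S"
    by blast
qed

lemma initial_sections_singleton:
  assumes "is_initial F Z"
  shows "\<exists>v. G Z = {v}"
proof -
  have "is_coproduct F 0 (\<lambda>_. Z) Z (\<lambda>_. undefined)"
    using assms unfolding is_coproduct_def is_initial_def by simp
  then have bij: "bij_betw (\<lambda>v. \<lambda>i\<in>{..<0::nat}. Gm undefined v) (G Z) (\<Pi>\<^sub>E i\<in>{..<0::nat}. G Z)"
    by (rule coproduct_sections_bij)
  then obtain v where v: "v \<in> G Z"
    unfolding bij_betw_def by fastforce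
  have "w = v" if "w \<in> G Z" for w
  proof (rule inj_onD[OF bij_betw_imp_inj_on[OF bij] _ that v])
    show "(\<lambda>i\<in>{..<0::nat}. Gm undefined w) = (\<lambda>i\<in>{..<0::nat}. Gm undefined v)"
      by (simp add: fun_eq_iff)
  qed
  then show ?thesis
    using v by blast
qed

end

section \<open>The converse\<close>

locale connected_sheaf_coproducts = F_site_presheaf +
  assumes sheaf_connected: "is_sheaf (connected_part F) J G Gm"
    and coproduct_bij: "\<And>n N S \<iota>. is_coproduct F n N S \<iota> \<Longrightarrow>
      bij_betw (\<lambda>v. \<lambda>i\<in>{..<n}. Gm (\<iota> i) v) (G S) (\<Pi>\<^sub>E i\<in>{..<n}. G (N i))"
begin

lemma eq_if_probes_eq:
  assumes X: "X \<in> Obj F" and v: "v \<in> G X" and w: "w \<in> G X"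
    and eq: "\<forall>k \<in> connected_probes X. Gm k v = Gm k w"
  shows "v = w"
proof -
  obtain n N S \<iota> \<phi> \<psi> where N: "\<forall>i<n. connected F (N i)" and cp: "is_coproduct F n N S \<iota>"
    and \<phi>: "\<phi> \<in> hom F X S" and \<psi>: "\<psi> \<in> hom F S X" and retr: "\<psi> \<cdot> \<phi> = Id F X"
    using decomposition[OF X] .
  note \<iota> = coprojection_in_hom[OF cp]
  have "Gm (\<iota> i) (Gm \<psi> v) = Gm (\<iota> i) (Gm \<psi> w)" if i: "i < n" for i
  proof -
    have "\<psi> \<cdot> \<iota> i \<in> connected_probes X"
      using comp_in_hom[OF \<iota>[OF i] \<psi>] N i by (auto simp: mem_connected_probes mem_hom)
    then show ?thesis
      using restrict_comp[OF \<iota>[OF i] \<psi> v, symmetric] restrict_comp[OF \<iota>[OF i] \<psi> w, symmetric] eq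
      by simp
  qed
  then have "(\<lambda>i\<in>{..<n}. Gm (\<iota> i) (Gm \<psi> v)) = (\<lambda>i\<in>{..<n}. Gm (\<iota> i) (Gm \<psi> w))"
    by (intro restrict_ext) simp
  then have "Gm \<psi> v = Gm \<psi> w"
    using bij_betw_imp_inj_on[OF coproduct_bij[OF cp]] restrict_in[OF \<psi>] v w
    by (auto dest: inj_onD)
  then show ?thesis
    using restrict_retraction[OF \<phi> \<psi> retr] v w by metis
qed

lemma glue_probes:
  assumes X: "X \<in> Obj F" and y: "matching_family (connected_part F) G Gm (connected_probes X) y"
  shows "\<exists>v \<in> G X. \<forall>k \<in> connected_probes X. Gm k v = y k"
proof -
  obtain n N S \<iota> \<phi> \<psi> where N: "\<forall>i<n. connected F (N i)" and cp: "is_coproduct F n N S \<iota>"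
    and \<phi>: "\<phi> \<in> hom F X S" and \<psi>: "\<psi> \<in> hom F S X" and retr: "\<psi> \<cdot> \<phi> = Id F X"
    using decomposition[OF X] .
  note \<iota> = coprojection_in_hom[OF cp]
  have \<psi>\<iota>: "\<psi> \<cdot> \<iota> i \<in> hom F (N i) X" if "i < n" for i
    using comp_in_hom[OF \<iota>[OF that] \<psi>] .
  then have probe: "\<psi> \<cdot> \<iota> i \<in> connected_probes X" if "i < n" for i
    using N that by (auto simp: mem_connected_probes mem_hom)
  have "y (\<psi> \<cdot> \<iota> i) \<in> G (N i)" if "i < n" for i
    using matching_probe_familyD(1)[OF y subset_refl probe[OF that]] \<psi>\<iota>[OF that]
    by (simp add: mem_hom)
  then have "(\<lambda>i\<in>{..<n}. y (\<psi> \<cdot> \<iota> i)) \<in> (\<Pi>\<^sub>E i\<in>{..<n}. G (N i))"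
    by (simp add: restrict_PiE_iff)
  then obtain u where u: "u \<in> G S" "(\<lambda>i\<in>{..<n}. Gm (\<iota> i) u) = (\<lambda>i\<in>{..<n}. y (\<psi> \<cdot> \<iota> i))"
    using coproduct_bij[OF cp] unfolding bij_betw_def by (metis (no_types, lifting) imageE)
  have u_i: "Gm (\<iota> i) u = y (\<psi> \<cdot> \<iota> i)" if "i < n" for i
    using fun_cong[OF u(2), of i] that by simp
  have "Gm k (Gm \<phi> u) = y k" if k: "k \<in> connected_probes X" for k
  proof -
    have kh: "k \<in> hom F (Dom F k) X" and W: "connected F (Dom F k)"
      using k by (simp_all add: mem_connected_probes)
    obtain i g where i: "i < n" and g: "g \<in> hom F (Dom F k) (N i)" and fac: "\<phi> \<cdot> k = \<iota> i \<cdot> g"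
      using connected_factor[OF W cp comp_in_hom[OF kh \<phi>]] by metis
    have "k = (\<psi> \<cdot> \<iota> i) \<cdot> g"
      using comp_assoc[OF g \<iota>[OF i] \<psi>] comp_assoc[OF kh \<phi> \<psi>] retr comp_id_left[OF kh] fac
      by simp
    moreover have "g \<in> connected_probes (N i)"
      using g W by (simp add: mem_connected_probes mem_hom)
    ultimately have "y k = Gm g (y (\<psi> \<cdot> \<iota> i))"
      using matching_probe_familyD(2)[OF y subset_refl probe[OF i]] \<psi>\<iota>[OF i]
      by (simp add: mem_hom)
    also have "\<dots> = Gm (\<phi> \<cdot> k) u"
      using fac restrict_comp[OF g \<iota>[OF i] u(1)] u_i[OF i] by simp
    also have "\<dots> = Gm k (Gm \<phi> u)"
      using restrict_comp[OF kh \<phi> u(1)] .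
    finally show ?thesis
      by simp
  qed
  then show ?thesis
    using restrict_in[OF \<phi> u(1)] by blast
qed

definition local_section where
  "local_section R x k = (THE s. s \<in> G (Dom F k) \<and>
     (\<forall>g \<in> pullback_sieve (connected_part F) k R. Gm g s = x (k \<cdot> g)))"

context
  fixes X R x
  assumes R: "R \<in> pushforward_incl F (connected_part F) J X"
    and x: "matching_family F G Gm R x"
begin

lemma local_section_unique_exists:
  assumes k: "k \<in> connected_probes X"
  shows "\<exists>!s. s \<in> G (Dom F k) \<and> (\<forall>g \<in> pullback_sieve (connected_part F) k R. Gm g s = x (k \<cdot> g))"
proof (rule is_sheafD[OF sheaf_connected])
  have kh: "k \<in> hom F (Dom F k) X"
    using k by (simp add: mem_connected_probes)
  have sieve: "sieve F X R"
    using R by (simp add: pushforward_covering_iff)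
  show "Dom F k \<in> Obj (connected_part F)" "pullback_sieve (connected_part F) k R \<in> J (Dom F k)"
    using k R by (simp_all add: mem_connected_probes pushforward_covering_iff)
  show "matching_family (connected_part F) G Gm (pullback_sieve (connected_part F) k R) (\<lambda>g. x (k \<cdot> g))"
    unfolding matching_family_def
  proof (intro conjI ballI impI)
    fix g assume "g \<in> pullback_sieve (connected_part F) k R"
    then have "k \<cdot> g \<in> R" "g \<in> hom F (Dom F g) (Dom F k)"
      by (auto simp: pullback_sieve_def mem_hom)
    then show "x (k \<cdot> g) \<in> G (Dom (connected_part F) g)"
      using x comp_in_hom[OF _ kh] by (auto simp: matching_family_def mem_hom)
  next
    fix g c assume "g \<in> pullback_sieve (connected_part F) k R"
      and "c \<in> Arr (connected_part F)" "Cod (connected_part F) c = Dom (connected_part F) g"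
    then have kg: "k \<cdot> g \<in> R" and gh: "g \<in> hom F (Dom F g) (Dom F k)"
      and ch: "c \<in> hom F (Dom F c) (Dom F g)"
      by (auto simp: pullback_sieve_def mem_hom)
    have "Dom F (k \<cdot> g) = Dom F g"
      using comp_in_hom[OF gh kh] by (simp add: mem_hom)
    then show "x (k \<cdot> Comp (connected_part F) g c) = Gm c (x (k \<cdot> g))"
      using x kg ch comp_assoc[OF ch gh kh] by (auto simp: matching_family_def mem_hom)
  qed
qed

lemma local_section:
  assumes "k \<in> connected_probes X"
  shows "local_section R x k \<in> G (Dom F k)"
    and "\<forall>g \<in> pullback_sieve (connected_part F) k R. Gm g (local_section R x k) = x (k \<cdot> g)"
  using theI'[OF local_section_unique_exists[OF assms]] unfolding local_section_def by blast+

lemma local_section_eqI: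
  assumes "k \<in> connected_probes X" "s \<in> G (Dom F k)"
    and "\<forall>g \<in> pullback_sieve (connected_part F) k R. Gm g s = x (k \<cdot> g)"
  shows "local_section R x k = s"
  using local_section_unique_exists[OF assms(1)] local_section[OF assms(1)] assms(2,3) by blast


lemma local_section_restrict:
  assumes k: "k \<in> connected_probes X" and s: "s \<in> G X" "\<forall>f \<in> R. Gm f s = x f"
  shows "local_section R x k = Gm k s"
proof (rule local_section_eqI[OF k])
  have kh: "k \<in> hom F (Dom F k) X"
    using k by (simp add: mem_connected_probes)
  show "Gm k s \<in> G (Dom F k)"
    using restrict_in[OF kh s(1)] .
  show "\<forall>g \<in> pullback_sieve (connected_part F) k R. Gm g (Gm k s) = x (k \<cdot> g)"
    using restrict_comp[OF _ kh s(1)] s(2) by (auto simp: pullback_sieve_def mem_hom)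
qed

lemma local_section_in_sieve:
  assumes k: "k \<in> connected_probes X" "k \<in> R"
  shows "local_section R x k = x k"
proof (rule local_section_eqI[OF k(1)])
  show "x k \<in> G (Dom F k)"
    using x k(2) by (simp add: matching_family_def)
  show "\<forall>g \<in> pullback_sieve (connected_part F) k R. Gm g (x k) = x (k \<cdot> g)"
    using x k(2) by (simp add: matching_family_def pullback_sieve_def)
qed

lemma matching_local_sections:
  "matching_family (connected_part F) G Gm (connected_probes X) (local_section R x)"
  unfolding matching_family_def
proof (intro conjI ballI impI)
  fix k assume "k \<in> connected_probes X"
  then show "local_section R x k \<in> G (Dom (connected_part F) k)"
    using local_section by simp
next
  fix k c assume k: "k \<in> connected_probes X"
    and "c \<in> Arr (connected_part F)" "Cod (connected_part F) c = Dom (connected_part F) k"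
  then have c: "c \<in> connected_probes (Dom F k)"
    by (auto simp: connected_probes_def)
  have kh: "k \<in> hom F (Dom F k) X" and ch: "c \<in> hom F (Dom F c) (Dom F k)"
    using k c by (simp_all add: mem_connected_probes)
  have "local_section R x (k \<cdot> c) = Gm c (local_section R x k)"
  proof (rule local_section_eqI[OF probe_comp[OF c kh]])
    show "Gm c (local_section R x k) \<in> G (Dom F (k \<cdot> c))"
      using restrict_in[OF ch local_section(1)[OF k]] comp_in_hom[OF ch kh] by (simp add: mem_hom)
    show "\<forall>g \<in> pullback_sieve (connected_part F) (k \<cdot> c) R.
        Gm g (Gm c (local_section R x k)) = x (k \<cdot> c \<cdot> g)"
    proof
      fix g assume g: "g \<in> pullback_sieve (connected_part F) (k \<cdot> c) R"
      then have gh: "g \<in> hom F (Dom F g) (Dom F c)" and Wg: "connected F (Dom F g)"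
        using comp_in_hom[OF ch kh] by (auto simp: pullback_sieve_def mem_hom)
      have "c \<cdot> g \<in> pullback_sieve (connected_part F) k R"
        using g comp_in_hom[OF gh ch] comp_assoc[OF gh ch kh] Wg k
        by (auto simp: pullback_sieve_def mem_hom mem_connected_probes)
      then show "Gm g (Gm c (local_section R x k)) = x (k \<cdot> c \<cdot> g)"
        using local_section(2)[OF k] restrict_comp[OF gh ch local_section(1)[OF k]]
          comp_assoc[OF gh ch kh] by simp
    qed
  qed
  then show "local_section R x (Comp (connected_part F) k c) = Gm c (local_section R x k)"
    by simp
qed

end

lemma pushforward_is_sheaf: "is_sheaf F (pushforward_incl F (connected_part F) J) G Gm"
  unfolding is_sheaf_iff
proof (intro ballI allI impI)
  fix X R x
  assume X: "X \<in> Obj F" and R: "R \<in> pushforward_incl F (connected_part F) J X"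
    and x: "matching_family F G Gm R x"
  obtain v where v: "v \<in> G X" "\<forall>k \<in> connected_probes X. Gm k v = local_section R x k"
    using glue_probes[OF X matching_local_sections[OF R x]] by blast
  have "Gm f v = x f" if f: "f \<in> R" for f
  proof -
    have fh: "f \<in> hom F (Dom F f) X"
      using R f sieve_arr by (auto simp: pushforward_covering_iff)
    show ?thesis
    proof (rule eq_if_probes_eq[OF dom_in_Obj restrict_in[OF fh v(1)]])
      show "f \<in> Arr F" "x f \<in> G (Dom F f)"
        using fh x f by (simp_all add: mem_hom matching_family_def)
      show "\<forall>k \<in> connected_probes (Dom F f). Gm k (Gm f v) = Gm k (x f)"
      proof
        fix k assume k: "k \<in> connected_probes (Dom F f)"
        have kh: "k \<in> hom F (Dom F k) (Dom F f)"
          using k by (simp add: mem_connected_probes)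
        have fk: "f \<cdot> k \<in> connected_probes X" "f \<cdot> k \<in> R"
          using probe_comp[OF k fh] sieve_comp[OF _ f kh] R by (auto simp: pushforward_covering_iff)
        have "Gm k (Gm f v) = Gm (f \<cdot> k) v"
          using restrict_comp[OF kh fh v(1)] by simp
        also have "\<dots> = x (f \<cdot> k)"
          using v(2) local_section_in_sieve[OF R x fk] fk(1) by simp
        also have "\<dots> = Gm k (x f)"
          using x f kh by (simp add: matching_family_def mem_hom)
        finally show "Gm k (Gm f v) = Gm k (x f)" .
      qed
    qed
  qed
  moreover have "s = v" if "s \<in> G X" "\<forall>f \<in> R. Gm f s = x f" for s
    using eq_if_probes_eq[OF X that(1) v(1)] local_section_restrict[OF R x _ that] v(2) by simp
  ultimately show "\<exists>!s. s \<in> G X \<and> (\<forall>f \<in> R. Gm f s = x f)"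
    using v(1) by blast
qed

end

theorem mainTheorem12:
  fixes F :: "('o, 'm) cat" and J :: "'o \<Rightarrow> 'm set set"
    and G :: "'o \<Rightarrow> 'v set" and Gm :: "'m \<Rightarrow> 'v \<Rightarrow> 'v"
  assumes "F_category F"
    and "grothendieck_topology (connected_part F) J"
    and "presheaf F G Gm"
  shows "is_sheaf F (pushforward_incl F (connected_part F) J) G Gm \<longleftrightarrow>
           (is_sheaf (connected_part F) J G Gm \<and>
            (\<forall>Z. is_initial F Z \<longrightarrow> (\<exists>v. G Z = {v})) \<and>
            (\<forall>n N S \<iota>. is_coproduct F n N S \<iota> \<longrightarrow>
               bij_betw (\<lambda>v. \<lambda>i\<in>{..<n}. Gm (\<iota> i) v) (G S) (\<Pi>\<^sub>E i\<in>{..<n}. G (N i))))"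
proof -
  interpret F_site_presheaf F J G Gm
    using assms by unfold_locales (simp_all add: F_category_def)
  show ?thesis
  proof
    assume "is_sheaf F (pushforward_incl F (connected_part F) J) G Gm"
    then interpret pushforward_sheaf F J G Gm
      by unfold_locales
    show "is_sheaf (connected_part F) J G Gm \<and>
        (\<forall>Z. is_initial F Z \<longrightarrow> (\<exists>v. G Z = {v})) \<and>
        (\<forall>n N S \<iota>. is_coproduct F n N S \<iota> \<longrightarrow>
           bij_betw (\<lambda>v. \<lambda>i\<in>{..<n}. Gm (\<iota> i) v) (G S) (\<Pi>\<^sub>E i\<in>{..<n}. G (N i)))"
      using restriction_is_sheaf initial_sections_singleton coproduct_sections_bij by blast
  next
    text \<open>Condition (b) is the case n = 0 of (c); the converse does not use it.\<close>
    assume "is_sheaf (connected_part F) J G Gm \<and>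
        (\<forall>Z. is_initial F Z \<longrightarrow> (\<exists>v. G Z = {v})) \<and>
        (\<forall>n N S \<iota>. is_coproduct F n N S \<iota> \<longrightarrow>
           bij_betw (\<lambda>v. \<lambda>i\<in>{..<n}. Gm (\<iota> i) v) (G S) (\<Pi>\<^sub>E i\<in>{..<n}. G (N i)))"
    then interpret connected_sheaf_coproducts F J G Gm
      by unfold_locales blast+
    show "is_sheaf F (pushforward_incl F (connected_part F) J) G Gm"
      by (rule pushforward_is_sheaf)
  qed
qed

end
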